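(* Let $p:\mathbb{R}^+\times\mathbb{R}^+\to[0,\infty)$ be bounded and continuous in $N$, and let $(n^0_j)_{j\ge1}$ be a nonnegative sequence with $\|n^0\|_1<\infty$ and $\|n^0\|_\infty<\infty$. Let $(n^m_j)$, $(N^m)$ be generated by the ITM upwind scheme under the CFL condition. Then for every $m\in\mathbb{N}$, $\|n^m\|_1=\sum_{j\ge1}\Delta s\,n^m_j=\|n^0\|_1$.
   Context: ITM upwind scheme: fix $\Delta s,\Delta t>0$; set $s_j=(j-\tfrac12)\Delta s$, $I_j=[(j-1)\Delta s,j\Delta s)$ for $j\in\{1,2,\dots\}$, and $t^m=m\Delta t$. For a sequence $u=(u_j)_{j\ge1}$, $\|u\|_1=\sum_{j\ge1}\Delta s|u_j|$ and $\|u\|_\infty=\sup_j|u_j|$. Given nonnegative initial values $(n^0_j)_{j\ge1}$, for $m=0,1,2,\dots$: $N^m\ge0$ is a solution of $N^m=\sum_{j\ge1}\Delta s\,p(s_j,N^m)\,n^m_j$ (a nonnegative solution always exists), one sets $n^m_0:=N^m$, and $n^{m+1}_j=n^m_j-\frac{\Delta t}{\Delta s}(n^m_j-n^m_{j-1})-\Delta t\,p(s_j,N^m)\,n^m_j$ for $j\ge1$. CFL condition: $\Delta t\le\left(\frac{1}{\Delta s}+\|p\|_\infty\right)^{-1}$, where $\|p\|_\infty=\sup|p|$. *)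

theory Defs
  imports "HOL-Analysis.Analysis"
begin

definition grid_s :: "real \<Rightarrow> nat \<Rightarrow> real" where
  "grid_s ds j = (real j - 1/2) * ds"

definition norm1 :: "real \<Rightarrow> (nat \<Rightarrow> real) \<Rightarrow> real" where
  "norm1 ds u = (\<Sum>\<^sub>\<infinity>j\<in>{1..}. ds * \<bar>u j\<bar>)"

definition normInf :: "(nat \<Rightarrow> real) \<Rightarrow> real" where
  "normInf u = (SUP j\<in>{1..}. \<bar>u j\<bar>)"

definition pnorm :: "(real \<Rightarrow> real \<Rightarrow> real) \<Rightarrow> real" where
  "pnorm p = (SUP x\<in>{0..} \<times> {0..}. \<bar>p (fst x) (snd x)\<bar>)"

text \<open>The ITM upwind scheme: n m j is n^m_j (with n m 0 = N^m), NN m is N^m.\<close>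
definition ITM_upwind ::
  "(real \<Rightarrow> real \<Rightarrow> real) \<Rightarrow> real \<Rightarrow> real \<Rightarrow> (nat \<Rightarrow> nat \<Rightarrow> real) \<Rightarrow> (nat \<Rightarrow> real) \<Rightarrow> bool" where
  "ITM_upwind p ds dt n NN \<longleftrightarrow>
     (\<forall>m. NN m \<ge> 0
        \<and> ((\<lambda>j. ds * p (grid_s ds j) (NN m) * n m j) has_sum NN m) {1..}
        \<and> n m 0 = NN m
        \<and> (\<forall>j\<ge>1. n (Suc m) j = n m j - dt / ds * (n m j - n m (j - 1))
                                 - dt * p (grid_s ds j) (NN m) * n m j))"

end

theory Submission
  imports Defs
begin

text \<open>Under the CFL condition each update n^{m+1}_j is a convex-type combination of n^m_j and
  n^m_{j-1} with nonnegative coefficients, so nonnegativity propagates. Summing the update over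
  j \<ge> 1, the flux terms telescope to (dt/ds) n^m_0 = (dt/ds) N^m, which is exactly cancelled by
  the death term, because N^m is defined as the total weighted death rate. Hence the mass, and
  for nonnegative sequences the L1 norm, is conserved.\<close>

lemma has_sum_shift_nat:
  fixes f :: "nat \<Rightarrow> 'a::topological_comm_monoid_add"
  assumes "(f has_sum S) {1..}"
  shows "((\<lambda>j. f (j - 1)) has_sum (f 0 + S)) {1..}"
proof -
  have "(f has_sum (f 0 + S)) (insert 0 {1..})"
    using assms by (intro has_sum_insert) auto
  moreover have "insert 0 {1..} = (UNIV :: nat set)" by auto
  ultimately have "((\<lambda>j. f (j - 1)) \<circ> Suc has_sum (f 0 + S)) UNIV" by (simp add: comp_def)
  then have "((\<lambda>j. f (j - 1)) has_sum (f 0 + S)) (range Suc)"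
    by (subst has_sum_reindex) auto
  moreover have "range Suc = {1::nat..}" by (auto simp: image_iff Suc_le_eq gr0_conv_Suc)
  ultimately show ?thesis by simp
qed

lemma upwind_step_has_sum:
  fixes u v q :: "nat \<Rightarrow> real"
  assumes ds: "ds \<noteq> 0"
    and mass: "(u has_sum S) {1..}"
    and boundary: "((\<lambda>j. ds * q j * u j) has_sum u 0) {1..}"
    and step: "\<And>j. j \<ge> 1 \<Longrightarrow> v j = u j - dt / ds * (u j - u (j - 1)) - dt * q j * u j"
  shows "(v has_sum S) {1..}"
proof -
  have "((\<lambda>j. (1 - dt / ds) * u j + dt / ds * u (j - 1) + (- dt / ds) * (ds * q j * u j))
      has_sum ((1 - dt / ds) * S + dt / ds * (u 0 + S) + (- dt / ds) * u 0)) {1..}"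
    by (intro has_sum_add has_sum_cmult_right mass boundary has_sum_shift_nat)
  moreover have "(1 - dt / ds) * S + dt / ds * (u 0 + S) + (- dt / ds) * u 0 = S"
    by (simp add: algebra_simps)
  moreover have "(1 - dt / ds) * u j + dt / ds * u (j - 1) + (- dt / ds) * (ds * q j * u j) = v j"
    if "j \<in> {1..}" for j
    using that ds step by (auto simp: field_simps)
  ultimately show ?thesis
    using has_sum_cong[of "{1..}"] by (metis (no_types, lifting))
qed

lemma upwind_update_nonneg:
  fixes x y :: real
  assumes ds: "ds > 0" and dt: "dt \<ge> 0"
    and CFL: "dt / ds + dt * q \<le> 1"
    and "x \<ge> 0" "y \<ge> 0"
  shows "x - dt / ds * (x - y) - dt * q * x \<ge> 0"
proof -
  have "x - dt / ds * (x - y) - dt * q * x = (1 - dt / ds - dt * q) * x + dt / ds * y"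
    by (simp add: algebra_simps diff_divide_distrib)
  also have "\<dots> \<ge> 0"
    using assms by (intro add_nonneg_nonneg mult_nonneg_nonneg) auto
  finally show ?thesis .
qed

lemma pnorm_upper:
  assumes "bdd_above ((\<lambda>x. \<bar>p (fst x) (snd x)\<bar>) ` ({0..} \<times> {0..}))"
    and "s \<ge> 0" "N \<ge> 0"
  shows "\<bar>p s N\<bar> \<le> pnorm p"
proof -
  have "\<bar>p (fst (s, N)) (snd (s, N))\<bar> \<le> pnorm p"
    unfolding pnorm_def using assms by (intro cSUP_upper) auto
  then show ?thesis by simp
qed

lemma CFL_bound:
  fixes ds dt P q :: real
  assumes ds: "ds > 0" and dt: "dt > 0" and P: "P \<ge> 0" and q: "q \<le> P"
    and CFL: "dt \<le> inverse (1 / ds + P)"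
  shows "dt / ds + dt * q \<le> 1"
proof -
  have "1 / ds + P > 0" using ds P by (simp add: add_pos_nonneg)
  then have "dt * (1 / ds + P) \<le> 1"
    using CFL by (simp add: field_simps)
  moreover have "dt * q \<le> dt * P" using q dt by simp
  ultimately show ?thesis by (simp add: field_simps)
qed

lemma ITM_upwind_nonneg_mass:
  fixes p :: "real \<Rightarrow> real \<Rightarrow> real" and n :: "nat \<Rightarrow> nat \<Rightarrow> real"
  assumes ds: "ds > 0" and dt: "dt > 0"
    and p_bdd: "bdd_above ((\<lambda>x. \<bar>p (fst x) (snd x)\<bar>) ` ({0..} \<times> {0..}))"
    and init_nonneg: "\<And>j. j \<ge> 1 \<Longrightarrow> n 0 j \<ge> 0"
    and init_mass: "(n 0 has_sum S) {1..}"
    and scheme: "ITM_upwind p ds dt n NN"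
    and CFL: "dt \<le> inverse (1 / ds + pnorm p)"
  shows "(\<forall>j\<ge>1. n m j \<ge> 0) \<and> (n m has_sum S) {1..}"
proof (induction m)
  case 0
  then show ?case using init_nonneg init_mass by simp
next
  case (Suc m)
  define q where "q j = p (grid_s ds j) (NN m)" for j
  have N_nonneg: "NN m \<ge> 0"
    and boundary: "((\<lambda>j. ds * q j * n m j) has_sum n m 0) {1..}"
    and N_eq: "n m 0 = NN m"
    and step: "\<And>j. j \<ge> 1 \<Longrightarrow>
      n (Suc m) j = n m j - dt / ds * (n m j - n m (j - 1)) - dt * q j * n m j"
    using scheme unfolding ITM_upwind_def q_def by auto
  have grid_nonneg: "grid_s ds j \<ge> 0" if "j \<ge> 1" for j
    using that ds unfolding grid_s_def by simp
  have pnorm_nonneg: "pnorm p \<ge> 0"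
    using pnorm_upper[OF p_bdd, of 0 0] by simp
  have q_le: "q j \<le> pnorm p" if "j \<ge> 1" for j
    using pnorm_upper[OF p_bdd grid_nonneg[OF that] N_nonneg] unfolding q_def by simp
  have u_nonneg: "n m j \<ge> 0" for j
    using Suc N_nonneg N_eq by (cases "j = 0") auto
  have "n (Suc m) j \<ge> 0" if "j \<ge> 1" for j
    unfolding step[OF that] using ds dt u_nonneg
    by (intro upwind_update_nonneg CFL_bound[OF ds dt pnorm_nonneg q_le[OF that] CFL]) auto
  moreover have "(n (Suc m) has_sum S) {1..}"
    using Suc upwind_step_has_sum[of ds "n m" S q "n (Suc m)" dt] ds boundary step by simp
  ultimately show ?case by simp
qed

theorem mainTheorem3:
  fixes p :: "real \<Rightarrow> real \<Rightarrow> real"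
    and ds dt :: real
    and n :: "nat \<Rightarrow> nat \<Rightarrow> real"
    and NN :: "nat \<Rightarrow> real"
  assumes ds_pos: "ds > 0" and dt_pos: "dt > 0"
    and p_nonneg: "\<And>s N. s \<ge> 0 \<Longrightarrow> N \<ge> 0 \<Longrightarrow> p s N \<ge> 0"
    and p_bdd: "bdd_above ((\<lambda>x. \<bar>p (fst x) (snd x)\<bar>) ` ({0..} \<times> {0..}))"
    and p_cont: "\<And>s. s \<ge> 0 \<Longrightarrow> continuous_on {0..} (p s)"
    and init_nonneg: "\<And>j. j \<ge> 1 \<Longrightarrow> n 0 j \<ge> 0"
    and init_L1: "(\<lambda>j. ds * \<bar>n 0 j\<bar>) summable_on {1..}"
    and init_Linf: "bdd_above ((\<lambda>j. \<bar>n 0 j\<bar>) ` {1..})"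
    and scheme: "ITM_upwind p ds dt n NN"
    and CFL: "dt \<le> inverse (1 / ds + pnorm p)"
  shows "(\<lambda>j. ds * \<bar>n m j\<bar>) summable_on {1..}
         \<and> norm1 ds (n m) = (\<Sum>\<^sub>\<infinity>j\<in>{1..}. ds * n m j)
         \<and> (\<Sum>\<^sub>\<infinity>j\<in>{1..}. ds * n m j) = norm1 ds (n 0)"
proof -
  define S where "S = (\<Sum>\<^sub>\<infinity>j\<in>{1..}. n 0 j)"
  have "(\<lambda>j. inverse ds * (ds * \<bar>n 0 j\<bar>)) summable_on {1..}"
    using init_L1 by (rule summable_on_cmult_right)
  moreover have "inverse ds * (ds * \<bar>n 0 j\<bar>) = n 0 j" if "j \<in> {1..}" for j
    using that ds_pos init_nonneg by simp
  ultimately have "n 0 summable_on {1..}"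
    using summable_on_cong[of "{1..}" "\<lambda>j. inverse ds * (ds * \<bar>n 0 j\<bar>)" "n 0"] by blast
  then have "(n 0 has_sum S) {1..}" unfolding S_def by (rule has_sum_infsum)
  then have mass: "(\<forall>j\<ge>1. n k j \<ge> 0) \<and> (n k has_sum S) {1..}" for k
    using ITM_upwind_nonneg_mass[OF ds_pos dt_pos p_bdd init_nonneg _ scheme CFL] by blast
  have weighted: "((\<lambda>j. ds * n k j) has_sum (ds * S)) {1..}" for k
    using mass[of k] has_sum_cmult_right by blast
  have weighted_abs: "((\<lambda>j. ds * \<bar>n k j\<bar>) has_sum (ds * S)) {1..}" for k
    using weighted[of k] mass[of k]
      has_sum_cong[of "{1..}" "\<lambda>j. ds * \<bar>n k j\<bar>" "\<lambda>j. ds * n k j"] by simp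
  show ?thesis
    unfolding norm1_def
    using has_sum_imp_summable[OF weighted_abs[of m]] infsumI[OF weighted_abs[of m]]
      infsumI[OF weighted_abs[of 0]] infsumI[OF weighted[of m]]
    by simp
qed

end
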